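(* For every integer $n\ge 2$, the path $P_n$ on $n$ vertices satisfies $\lambda(P_n)=\lfloor n/2\rfloor$.
   Context: All graphs are finite and simple; $d(u,v)$ denotes the usual graph distance. For integers $m\le n$, $[m,n]=\{m,m+1,\ldots,n\}$. For a graph $G$ and a positive integer $l$, a distance $l$-labeling of $G$ is a function $f:V(G)\to[0,l]$ such that (i) $f(V(G))=[0,l]$ or $f(V(G))=[1,l]$, and (ii) whenever two distinct vertices $u,v$ satisfy $f(u)=f(v)=k$, we have $d(u,v)=k$. The labeling length $\lambda(G)$ is the minimum $l$ for which $G$ admits a distance $l$-labeling. *)

theory Defs
  imports Main "HOL-Library.Extended_Nat"
begin

definition simple_graph :: "'a set \<Rightarrow> ('a \<Rightarrow> 'a \<Rightarrow> bool) \<Rightarrow> bool" where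
  "simple_graph V E \<longleftrightarrow> finite V \<and> (\<forall>u v. E u v \<longrightarrow> E v u) \<and> (\<forall>u. \<not> E u u)
     \<and> (\<forall>u v. E u v \<longrightarrow> u \<in> V \<and> v \<in> V)"

definition walk_of_len :: "'a set \<Rightarrow> ('a \<Rightarrow> 'a \<Rightarrow> bool) \<Rightarrow> 'a \<Rightarrow> 'a \<Rightarrow> nat \<Rightarrow> bool" where
  "walk_of_len V E u v k \<longleftrightarrow> (\<exists>xs. length xs = Suc k \<and> hd xs = u \<and> last xs = v
      \<and> set xs \<subseteq> V \<and> (\<forall>i<k. E (xs ! i) (xs ! Suc i)))"

definition gdist :: "'a set \<Rightarrow> ('a \<Rightarrow> 'a \<Rightarrow> bool) \<Rightarrow> 'a \<Rightarrow> 'a \<Rightarrow> enat" where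
  "gdist V E u v = (if \<exists>k. walk_of_len V E u v k
      then enat (LEAST k. walk_of_len V E u v k) else \<infinity>)"

definition distance_labeling :: "'a set \<Rightarrow> ('a \<Rightarrow> 'a \<Rightarrow> bool) \<Rightarrow> ('a \<Rightarrow> nat) \<Rightarrow> nat \<Rightarrow> bool" where
  "distance_labeling V E f l \<longleftrightarrow>
     (f ` V = {0..l} \<or> f ` V = {1..l}) \<and>
     (\<forall>u\<in>V. \<forall>v\<in>V. u \<noteq> v \<and> f u = f v \<longrightarrow> gdist V E u v = enat (f u))"

definition labeling_length :: "'a set \<Rightarrow> ('a \<Rightarrow> 'a \<Rightarrow> bool) \<Rightarrow> nat" where
  "labeling_length V E = (LEAST l. 0 < l \<and> (\<exists>f. distance_labeling V E f l))"

definition path_V :: "nat \<Rightarrow> nat set" where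
  "path_V n = {0..<n}"

definition path_E :: "nat \<Rightarrow> nat \<Rightarrow> nat \<Rightarrow> bool" where
  "path_E n i j \<longleftrightarrow> i < n \<and> j < n \<and> (i + 1 = j \<or> j + 1 = i)"

end

theory Submission
  imports Defs
begin

(* Distances in P_n are |i - j|, so the vertices carrying a label k lie in some {a, a + k}:
   label 0 is used at most once and every other label at most twice, whence n <= 2 l + 1.
   Conversely, split the vertices 0, ..., 2m into the blocks [0, m] and [m + 1, 2m] and label
   each vertex by its distance to its mirror image within its block. The labels of the two
   blocks have different parities, so equal labels only occur on mirror pairs, and they cover
   [0, m]. For even n a last vertex with the fresh label m + 1 is appended. *)

lemma walk_of_len_potential_bound:
  fixes h :: "'a \<Rightarrow> int"
  assumes walk: "walk_of_len V E u v k"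
    and lipschitz: "\<And>x y. E x y \<Longrightarrow> \<bar>h x - h y\<bar> \<le> 1"
  shows "\<bar>h u - h v\<bar> \<le> int k"
proof -
  obtain xs where xs: "length xs = Suc k" "hd xs = u" "last xs = v"
    and steps: "\<forall>i<k. E (xs ! i) (xs ! Suc i)"
    using walk unfolding walk_of_len_def by blast
  have "\<bar>h (xs ! 0) - h (xs ! t)\<bar> \<le> int t" if "t \<le> k" for t
    using that
  proof (induction t)
    case (Suc t)
    then have "\<bar>h (xs ! t) - h (xs ! Suc t)\<bar> \<le> 1"
      using steps lipschitz by simp
    with Suc show ?case by simp
  qed simp
  moreover have "xs \<noteq> []"
    using xs(1) by auto
  then have "xs ! 0 = u" "xs ! k = v"
    using xs by (simp_all add: hd_conv_nth last_conv_nth)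
  ultimately show ?thesis by fastforce
qed

lemma gdist_eq_enatI:
  assumes "walk_of_len V E u v k" and "\<And>k'. walk_of_len V E u v k' \<Longrightarrow> k \<le> k'"
  shows "gdist V E u v = enat k"
  using assms unfolding gdist_def by (auto intro: Least_equality)

lemma walk_of_len_path:
  assumes "i < n" "j < n"
  shows "walk_of_len (path_V n) (path_E n) i j (nat \<bar>int i - int j\<bar>)"
proof (cases "i \<le> j")
  case True
  have "length [i..<Suc j] = Suc (nat \<bar>int i - int j\<bar>)" "hd [i..<Suc j] = i"
    "last [i..<Suc j] = j" "set [i..<Suc j] \<subseteq> path_V n"
    "\<forall>t<nat \<bar>int i - int j\<bar>. path_E n ([i..<Suc j] ! t) ([i..<Suc j] ! Suc t)"
    using True assms by (auto simp: path_V_def path_E_def hd_upt nth_upt simp del: upt_Suc)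
  then show ?thesis unfolding walk_of_len_def by blast
next
  case False
  let ?xs = "rev [j..<Suc i]"
  have "length ?xs = Suc (nat \<bar>int i - int j\<bar>)" "hd ?xs = i"
    "last ?xs = j" "set ?xs \<subseteq> path_V n"
    "\<forall>t<nat \<bar>int i - int j\<bar>. path_E n (?xs ! t) (?xs ! Suc t)"
    using False assms
    by (auto simp: path_V_def path_E_def hd_rev last_rev rev_nth simp del: upt_Suc)
  then show ?thesis unfolding walk_of_len_def by blast
qed

lemma gdist_path:
  assumes "i < n" "j < n"
  shows "gdist (path_V n) (path_E n) i j = enat (nat \<bar>int i - int j\<bar>)"
proof (rule gdist_eq_enatI)
  show "walk_of_len (path_V n) (path_E n) i j (nat \<bar>int i - int j\<bar>)"
    using assms by (rule walk_of_len_path)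
  fix k assume "walk_of_len (path_V n) (path_E n) i j k"
  then have "\<bar>int i - int j\<bar> \<le> int k"
    by (rule walk_of_len_potential_bound) (auto simp: path_E_def)
  then show "nat \<bar>int i - int j\<bar> \<le> k" by simp
qed

lemma distance_labeling_path_iff:
  "distance_labeling (path_V n) (path_E n) f l \<longleftrightarrow>
     (f ` {0..<n} = {0..l} \<or> f ` {0..<n} = {1..l}) \<and>
     (\<forall>u<n. \<forall>v<n. u \<noteq> v \<and> f u = f v \<longrightarrow> nat \<bar>int u - int v\<bar> = f u)"
  using gdist_path[of _ n] unfolding distance_labeling_def path_V_def by auto

lemma path_label_class_card:
  assumes collisions: "\<forall>u<n. \<forall>v<n. u \<noteq> v \<and> f u = f v \<longrightarrow> nat \<bar>int u - int v\<bar> = f u"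
  shows "card {v. v < n \<and> f v = k} \<le> (if k = 0 then 1 else 2)"
proof -
  define C where "C = {v. v < n \<and> f v = k}"
  define a where "a = Min C"
  have "C \<subseteq> {a, a + k}"
  proof
    fix v assume "v \<in> C"
    then have "a \<in> C" "a \<le> v"
      using Min_in[of C] by (auto simp: C_def a_def)
    with \<open>v \<in> C\<close> have "v \<noteq> a \<Longrightarrow> nat \<bar>int v - int a\<bar> = k"
      using collisions[rule_format, of v a] by (simp add: C_def)
    with \<open>a \<le> v\<close> show "v \<in> {a, a + k}"
      by (cases "v = a") auto
  qed
  then have "card C \<le> card {a, a + k}"
    by (rule card_mono[rotated]) simp
  also have "\<dots> \<le> (if k = 0 then 1 else 2)"
    by (simp add: card_insert_if)
  finally show ?thesis
    unfolding C_def .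
qed

lemma distance_labeling_path_length_ge:
  assumes "distance_labeling (path_V n) (path_E n) f l"
  shows "n \<le> 2 * l + 1"
proof -
  have labels: "f ` {0..<n} \<subseteq> {0..l}"
    and collisions: "\<forall>u<n. \<forall>v<n. u \<noteq> v \<and> f u = f v \<longrightarrow> nat \<bar>int u - int v\<bar> = f u"
    using assms unfolding distance_labeling_path_iff by auto
  have "{0..<n} = (\<Union>k\<in>{0..l}. {v. v < n \<and> f v = k})"
    using labels by auto
  then have "n = card (\<Union>k\<in>{0..l}. {v. v < n \<and> f v = k})"
    by (metis card_atLeastLessThan diff_zero)
  also have "\<dots> \<le> (\<Sum>k\<in>{0..l}. card {v. v < n \<and> f v = k})"
    by (rule card_UN_le) simp
  also have "\<dots> \<le> (\<Sum>k\<in>{0..l}. if k = 0 then 1 else 2)"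
    by (intro sum_mono path_label_class_card collisions)
  also have "\<dots> = 2 * l + 1"
    by (induction l) auto
  finally show ?thesis .
qed

(* The sum of the endpoints of the block containing i, so that mirror_sum m i - i is the
   mirror image of i. *)
definition mirror_sum :: "nat \<Rightarrow> nat \<Rightarrow> nat" where
  "mirror_sum m i = (if i \<le> m then m else 3 * m + 1)"

definition mirror_labeling :: "nat \<Rightarrow> nat \<Rightarrow> nat" where
  "mirror_labeling m i = nat \<bar>int (mirror_sum m i) - 2 * int i\<bar>"

lemma mirror_labeling_collision:
  assumes "u \<noteq> v" and "mirror_labeling m u = mirror_labeling m v"
  shows "nat \<bar>int u - int v\<bar> = mirror_labeling m u"
proof -
  define s where "s i = int (mirror_sum m i)" for i
  have eq: "\<bar>s u - 2 * int u\<bar> = \<bar>s v - 2 * int v\<bar>"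
    using assms(2) by (simp add: mirror_labeling_def s_def)
  then have "even (s u + s v)"
    unfolding abs_eq_iff by presburger
  \<comment> \<open>the block sums m and 3m + 1 have different parities\<close>
  then have "s u = s v"
    by (auto simp: s_def mirror_sum_def split: if_splits)
  with eq assms(1) have "int u + int v = s u"
    unfolding abs_eq_iff by auto
  then show ?thesis
    by (simp add: mirror_labeling_def s_def)
qed

lemma mirror_labeling_image: "mirror_labeling m ` {0..<2 * m + 1} = {0..m}"
proof
  show "mirror_labeling m ` {0..<2 * m + 1} \<subseteq> {0..m}"
    by (auto simp: mirror_labeling_def mirror_sum_def)
  show "{0..m} \<subseteq> mirror_labeling m ` {0..<2 * m + 1}"
  proof
    fix k assume "k \<in> {0..m}"
    then have "k \<le> m" by simp
    show "k \<in> mirror_labeling m ` {0..<2 * m + 1}"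
    proof (cases "even (m - k)")
      case True
      then obtain i where "m - k = 2 * i" ..
      then have "mirror_labeling m i = k" "i < 2 * m + 1"
        using \<open>k \<le> m\<close> by (auto simp: mirror_labeling_def mirror_sum_def)
      then show ?thesis by force
    next
      case False
      then have "k < m" "even (3 * m + 1 - k)"
        using \<open>k \<le> m\<close> by (auto intro: le_neq_implies_less)
      then obtain i where "3 * m + 1 - k = 2 * i" by blast
      then have "mirror_labeling m i = k" "i < 2 * m + 1"
        using \<open>k < m\<close> by (auto simp: mirror_labeling_def mirror_sum_def)
      then show ?thesis by force
    qed
  qed
qed

lemma distance_labeling_odd_path:
  "distance_labeling (path_V (2 * m + 1)) (path_E (2 * m + 1)) (mirror_labeling m) m"
  unfolding distance_labeling_path_iff
  using mirror_labeling_image mirror_labeling_collision by blast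

lemma distance_labeling_even_path:
  "distance_labeling (path_V (2 * m + 2)) (path_E (2 * m + 2))
     ((mirror_labeling m)(2 * m + 1 := m + 1)) (m + 1)"
proof -
  let ?f = "(mirror_labeling m)(2 * m + 1 := m + 1)"
  have "{0..<2 * m + 2} = insert (2 * m + 1) {0..<2 * m + 1}"
    by auto
  moreover have "?f ` {0..<2 * m + 1} = mirror_labeling m ` {0..<2 * m + 1}"
    by (intro image_cong) auto
  ultimately have "?f ` {0..<2 * m + 2} = insert (m + 1) (mirror_labeling m ` {0..<2 * m + 1})"
    by (simp only: image_insert fun_upd_same)
  also have "\<dots> = {0..m + 1}"
    unfolding mirror_labeling_image by auto
  finally have image: "?f ` {0..<2 * m + 2} = {0..m + 1}" .
  have old_labels: "mirror_labeling m w \<le> m" if "w < 2 * m + 1" for w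
    using that mirror_labeling_image by fastforce
  have "nat \<bar>int u - int v\<bar> = ?f u"
    if "u < 2 * m + 2" "v < 2 * m + 2" "u \<noteq> v" "?f u = ?f v" for u v
  proof -
    have "u \<noteq> 2 * m + 1" "v \<noteq> 2 * m + 1"
      using that old_labels[of u] old_labels[of v] by (auto split: if_splits)
    then show ?thesis
      using that mirror_labeling_collision[of u v m] by simp
  qed
  then show ?thesis
    unfolding distance_labeling_path_iff using image by blast
qed

theorem mainTheorem2:
  fixes n :: nat
  assumes "n \<ge> 2"
  shows "labeling_length (path_V n) (path_E n) = n div 2"
  unfolding labeling_length_def
proof (rule Least_equality)
  have "\<exists>f. distance_labeling (path_V n) (path_E n) f (n div 2)"
  proof (cases "even n")
    case True
    then have "n = 2 * (n div 2 - 1) + 2" "n div 2 = n div 2 - 1 + 1"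
      using assms by auto
    then show ?thesis
      using distance_labeling_even_path[of "n div 2 - 1"] by metis
  next
    case False
    then have "n = 2 * (n div 2) + 1"
      by simp
    then show ?thesis
      using distance_labeling_odd_path[of "n div 2"] by metis
  qed
  then show "0 < n div 2 \<and> (\<exists>f. distance_labeling (path_V n) (path_E n) f (n div 2))"
    using assms by simp
next
  fix l assume "0 < l \<and> (\<exists>f. distance_labeling (path_V n) (path_E n) f l)"
  then show "n div 2 \<le> l"
    using distance_labeling_path_length_ge by fastforce
qed

end
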